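(* Let ${\sf Gr}^{\sf count}$ be the category of countable groups and ${\sf Gr}^{\sf f.g.}$ the category of finitely generated groups (both full subcategories of the category of groups). Any functor ${\sf Gr}^{\sf count}\to{\sf Gr}^{\sf f.g.}$ is isomorphic to a constant functor. *)

theory Defs
  imports "HOL-Algebra.Generated_Groups"
begin

type_synonym ngroup = "nat monoid"

text \<open>Objects of Gr^count (up to the equivalence with the full subcategory of
groups whose carrier is a subset of nat).\<close>
definition cgrp :: "ngroup \<Rightarrow> bool" where
  "cgrp G \<longleftrightarrow> group G"

definition fg_grp :: "ngroup \<Rightarrow> bool" where
  "fg_grp G \<longleftrightarrow> group G \<and>
     (\<exists>S. finite S \<and> S \<subseteq> carrier G \<and> generate G S = carrier G)"

definition mor :: "ngroup \<Rightarrow> ngroup \<Rightarrow> (nat \<Rightarrow> nat) set" where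
  "mor G H = hom G H \<inter> extensional (carrier G)"

definition idm :: "ngroup \<Rightarrow> nat \<Rightarrow> nat" where
  "idm G = restrict (\<lambda>x. x) (carrier G)"

definition is_functor ::
  "(ngroup \<Rightarrow> ngroup) \<Rightarrow> (ngroup \<Rightarrow> ngroup \<Rightarrow> (nat \<Rightarrow> nat) \<Rightarrow> (nat \<Rightarrow> nat)) \<Rightarrow> bool" where
  "is_functor F Fm \<longleftrightarrow>
     (\<forall>G. cgrp G \<longrightarrow> fg_grp (F G)) \<and>
     (\<forall>G H f. cgrp G \<and> cgrp H \<and> f \<in> mor G H \<longrightarrow> Fm G H f \<in> mor (F G) (F H)) \<and>
     (\<forall>G. cgrp G \<longrightarrow> Fm G G (idm G) = idm (F G)) \<and>
     (\<forall>G H K f g. cgrp G \<and> cgrp H \<and> cgrp K \<and> f \<in> mor G H \<and> g \<in> mor H K \<longrightarrow>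
        Fm G K (compose (carrier G) g f) = compose (carrier (F G)) (Fm H K g) (Fm G H f))"

text \<open>F is naturally isomorphic to the constant functor with value C
  (which sends every morphism to the identity of C).\<close>
definition iso_to_const ::
  "(ngroup \<Rightarrow> ngroup) \<Rightarrow> (ngroup \<Rightarrow> ngroup \<Rightarrow> (nat \<Rightarrow> nat) \<Rightarrow> (nat \<Rightarrow> nat)) \<Rightarrow> ngroup \<Rightarrow> bool" where
  "iso_to_const F Fm C \<longleftrightarrow>
     (\<exists>\<eta>. (\<forall>G. cgrp G \<longrightarrow> \<eta> G \<in> iso (F G) C \<inter> extensional (carrier (F G))) \<and>
          (\<forall>G H f. cgrp G \<and> cgrp H \<and> f \<in> mor G H \<longrightarrow>
             compose (carrier (F G)) (\<eta> H) (Fm G H f) = compose (carrier (F G)) (idm C) (\<eta> G)))"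

end

theory Submission
  imports Defs "HOL-Algebra.Product_Groups" "HOL-Library.Countable_Set"
begin

(* Let G be countable and let K be the direct sum of countably many copies of G. For every
   A \<subseteq> \<nat> the projection E_A of K onto the coordinates in A is an endomorphism, and composing
   it with the inclusion and the projection at a coordinate n gives id_G if n \<in> A and the
   trivial endomorphism of G otherwise. Since F K is finitely generated, it has only countably
   many endomorphisms, so F E_A = F E_B for some A \<noteq> B; a coordinate in A but not in B shows
   that F sends the trivial endomorphism of G to the identity. Consequently the images under F
   of G \<rightarrow> 1 and 1 \<rightarrow> G are mutually inverse, and these isomorphisms F G \<cong> F 1 are natural
   because 1 is terminal. *)

definition trivial_mor :: "ngroup \<Rightarrow> ngroup \<Rightarrow> nat \<Rightarrow> nat" where
  "trivial_mor G H = (\<lambda>x\<in>carrier G. \<one>\<^bsub>H\<^esub>)"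

definition trivial_ngroup :: ngroup where
  "trivial_ngroup = \<lparr>carrier = {0}, mult = \<lambda>_ _. 0, one = 0\<rparr>"

lemma group_trivial_ngroup: "group trivial_ngroup"
  unfolding trivial_ngroup_def by (rule groupI) auto

lemma trivial_mor_trivial_ngroup: "trivial_mor trivial_ngroup trivial_ngroup = idm trivial_ngroup"
  by (auto simp: trivial_mor_def idm_def trivial_ngroup_def)

lemma restrict_hom_in_mor: "group G \<Longrightarrow> h \<in> hom G H \<Longrightarrow> restrict h (carrier G) \<in> mor G H"
  unfolding mor_def by (auto intro: group.hom_restrict)

lemma compose_idm_left: "f \<in> mor G H \<Longrightarrow> compose (carrier G) (idm H) f = f"
  unfolding mor_def idm_def
  by (intro extensionalityI[where A = "carrier G"]) (auto simp: compose_def hom_in_carrier)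

lemma compose_trivial_mor_left:
  "f \<in> mor G H \<Longrightarrow> compose (carrier G) (trivial_mor H K) f = trivial_mor G K"
  unfolding mor_def trivial_mor_def
  by (intro extensionalityI[where A = "carrier G"]) (auto simp: compose_def hom_in_carrier)

lemma trivial_mor_in_mor: "group G \<Longrightarrow> group H \<Longrightarrow> trivial_mor G H \<in> mor G H"
  unfolding trivial_mor_def by (intro restrict_hom_in_mor trivial_hom)

lemma mor_compose:
  assumes "group G" "f \<in> mor G H" "g \<in> mor H K"
  shows "compose (carrier G) g f \<in> mor G K"
  using assms group.hom_compose[OF assms(1)] by (auto simp: mor_def)

lemma mor_inverse_imp_iso:
  assumes f: "f \<in> mor G H" and g: "g \<in> mor H G"
    and gf: "compose (carrier G) g f = idm G" and fg: "compose (carrier H) f g = idm H"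
  shows "f \<in> iso G H"
proof -
  have "g (f x) = x" if "x \<in> carrier G" for x
    using fun_cong[OF gf, of x] that by (simp add: compose_def idm_def)
  moreover have "f (g y) = y" if "y \<in> carrier H" for y
    using fun_cong[OF fg, of y] that by (simp add: compose_def idm_def)
  ultimately have "bij_betw f (carrier G) (carrier H)"
    using f g by (intro bij_betw_byWitness[where f' = g]) (auto simp: mor_def hom_def)
  then show ?thesis using f by (simp add: iso_def mor_def)
qed

lemma functor_mor:
  "is_functor F Fm \<Longrightarrow> group G \<Longrightarrow> group H \<Longrightarrow> f \<in> mor G H
    \<Longrightarrow> Fm G H f \<in> mor (F G) (F H)"
  unfolding is_functor_def cgrp_def by blast

lemma functor_idm: "is_functor F Fm \<Longrightarrow> group G \<Longrightarrow> Fm G G (idm G) = idm (F G)"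
  unfolding is_functor_def cgrp_def by blast

lemma functor_compose:
  assumes "is_functor F Fm" "group G" "group H" "group K" "f \<in> mor G H" "g \<in> mor H K"
  shows "Fm G K (compose (carrier G) g f) = compose (carrier (F G)) (Fm H K g) (Fm G H f)"
  using assms unfolding is_functor_def cgrp_def by blast

lemma functor_fg_grp: "is_functor F Fm \<Longrightarrow> group G \<Longrightarrow> fg_grp (F G)"
  unfolding is_functor_def cgrp_def by blast

lemma hom_eq_on_generate:
  assumes "group G" "group H" "f \<in> hom G H" "g \<in> hom G H" "S \<subseteq> carrier G"
    and "\<And>s. s \<in> S \<Longrightarrow> f s = g s" and "x \<in> generate G S"
  shows "f x = g x"
  using assms(7)
proof (induction rule: generate.induct)
  case one
  then show ?case using assms(1-4) by (simp add: hom_one)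
next
  case (incl s)
  then show ?case by (rule assms(6))
next
  case (inv s)
  then have "s \<in> carrier G" using assms(5) by blast
  then show ?case
    using assms(1-4,6) inv by (simp add: group_hom.hom_inv group_hom_axioms_def group_hom_def)
next
  case (eng x y)
  then have "x \<in> carrier G" "y \<in> carrier G"
    using assms(1,5) by (meson group.generate_incl subsetD)+
  then show ?case using eng assms(3,4) by (simp add: hom_mult)
qed

lemma countable_mor_fg_grp:
  assumes "fg_grp G" "group H"
  shows "countable (mor G H)"
proof -
  obtain S where G: "group G" and S: "finite S" "S \<subseteq> carrier G" "generate G S = carrier G"
    using assms unfolding fg_grp_def by blast
  have "inj_on (\<lambda>f. map f (sorted_list_of_set S)) (mor G H)"
  proof (rule inj_onI)
    fix f g assume f: "f \<in> mor G H" and g: "g \<in> mor G H"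
      and "map f (sorted_list_of_set S) = map g (sorted_list_of_set S)"
    then have "f s = g s" if "s \<in> S" for s
      using S(1) that by (simp add: map_eq_conv)
    then have "f x = g x" if "x \<in> carrier G" for x
      using hom_eq_on_generate[OF G assms(2) _ _ S(2)] f g that S(3) by (auto simp: mor_def hom_def)
    then show "f = g"
      using f g by (intro extensionalityI[where A = "carrier G"]) (auto simp: mor_def)
  qed
  then show ?thesis by (rule countable_image_inj_on[rotated]) simp
qed

lemma uncountable_UNIV_nat_set: "uncountable (UNIV :: nat set set)"
proof
  assume "countable (UNIV :: nat set set)"
  then have "range (from_nat_into (UNIV :: nat set set)) = Pow UNIV" by simp
  then show False using Cantors_theorem by blast
qed

lemma countable_finite_support: "countable {x :: nat \<Rightarrow> 'a::countable. finite {i. x i \<noteq> c}}"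
proof -
  have "{x :: nat \<Rightarrow> 'a. finite {i. x i \<noteq> c}} \<subseteq> range (\<lambda>xs i. if i < length xs then xs ! i else c)"
  proof
    fix x :: "nat \<Rightarrow> 'a" assume "x \<in> {x. finite {i. x i \<noteq> c}}"
    then obtain k where "{i. x i \<noteq> c} \<subseteq> {..<k}" using finite_nat_bounded by blast
    then have "x = (\<lambda>i. if i < length (map x [0..<k]) then map x [0..<k] ! i else c)"
      by (auto simp: fun_eq_iff)
    then show "x \<in> range (\<lambda>xs i. if i < length xs then xs ! i else c)" by blast
  qed
  then show ?thesis by (rule countable_subset) simp
qed

lemma countable_group_iso_ngroup:
  fixes S :: "('a, 'b) monoid_scheme"
  assumes S: "group S" and "countable (carrier S)"
  obtains K :: ngroup and \<phi> where "group K" "\<phi> \<in> iso S K"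
proof -
  interpret S: group S by (rule S)
  define enc where "enc = to_nat_on (carrier S)"
  define dec where "dec = inv_into (carrier S) enc"
  define K :: ngroup where
    "K = \<lparr>carrier = enc ` carrier S, mult = \<lambda>a b. enc (dec a \<otimes>\<^bsub>S\<^esub> dec b), one = enc \<one>\<^bsub>S\<^esub>\<rparr>"
  have "inj_on enc (carrier S)" unfolding enc_def using assms(2) by (rule inj_on_to_nat_on)
  then have dec_enc [simp]: "dec (enc x) = x" if "x \<in> carrier S" for x
    unfolding dec_def using that by simp
  have "group K"
  proof (rule groupI)
    fix x assume "x \<in> carrier K"
    then obtain s where s: "s \<in> carrier S" "x = enc s" by (auto simp: K_def)
    then have "enc (inv\<^bsub>S\<^esub> s) \<otimes>\<^bsub>K\<^esub> x = \<one>\<^bsub>K\<^esub>" by (simp add: K_def)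
    moreover have "enc (inv\<^bsub>S\<^esub> s) \<in> carrier K" using s by (simp add: K_def)
    ultimately show "\<exists>y\<in>carrier K. y \<otimes>\<^bsub>K\<^esub> x = \<one>\<^bsub>K\<^esub>" by blast
  qed (auto simp: K_def S.m_assoc)
  moreover have "enc \<in> iso S K"
    using \<open>inj_on enc (carrier S)\<close> by (auto simp: iso_def hom_def bij_betw_def K_def)
  ultimately show ?thesis by (rule that)
qed

lemma sum_power_insert_hom:
  assumes "group G"
  shows "(\<lambda>g i. if i = n then g else \<one>\<^bsub>G\<^esub>) \<in> hom G (sum_group UNIV (\<lambda>_. G))"
proof -
  interpret group G by (rule assms)
  have "finite {i. (if i = n then g else \<one>\<^bsub>G\<^esub>) \<noteq> \<one>\<^bsub>G\<^esub>}" for g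
    by (rule finite_subset[of _ "{n}"]) auto
  then show ?thesis
    by (auto simp: hom_def carrier_sum_group PiE_iff fun_eq_iff)
qed

lemma sum_power_proj_hom:
  assumes "group G"
  shows "(\<lambda>x. x n) \<in> hom (sum_group UNIV (\<lambda>_. G)) G"
  using assms by (auto simp: hom_def carrier_sum_group PiE_iff)

lemma sum_power_restrict_hom:
  assumes "group G"
  shows "(\<lambda>x i. if i \<in> A then x i else \<one>\<^bsub>G\<^esub>)
           \<in> hom (sum_group UNIV (\<lambda>_. G)) (sum_group UNIV (\<lambda>_. G))"
proof -
  interpret group G by (rule assms)
  have "finite {i. (if i \<in> A then x i else \<one>\<^bsub>G\<^esub>) \<noteq> \<one>\<^bsub>G\<^esub>}"
    if "finite {i. x i \<noteq> \<one>\<^bsub>G\<^esub>}" for x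
    by (rule finite_subset[OF _ that]) auto
  then show ?thesis
    by (auto simp: hom_def carrier_sum_group PiE_iff fun_eq_iff)
qed

lemma countable_carrier_sum_power:
  fixes G :: "('a::countable, 'b) monoid_scheme"
  assumes "group G"
  shows "countable (carrier (sum_group (UNIV :: nat set) (\<lambda>_. G)))"
proof -
  have "carrier (sum_group UNIV (\<lambda>_. G)) \<subseteq> {x. finite {i. x i \<noteq> \<one>\<^bsub>G\<^esub>}}"
    by (auto simp: carrier_sum_group assms)
  then show ?thesis by (rule countable_subset) (rule countable_finite_support)
qed

lemma ngroup_coordinate_retractions:
  assumes G: "group G"
  obtains K :: ngroup and I R :: "nat \<Rightarrow> nat \<Rightarrow> nat" and E :: "nat set \<Rightarrow> nat \<Rightarrow> nat"
  where "group K" "\<And>n. I n \<in> mor G K" "\<And>n. R n \<in> mor K G" "\<And>A. E A \<in> mor K K"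
    "\<And>n A. compose (carrier G) (R n) (compose (carrier G) (E A) (I n))
             = (if n \<in> A then idm G else trivial_mor G G)"
proof -
  interpret G: group G by (rule G)
  define S where "S = sum_group (UNIV :: nat set) (\<lambda>_. G)"
  have S: "group S" by (simp add: S_def G)
  obtain K :: ngroup and \<phi> where K: "group K" and \<phi>: "\<phi> \<in> iso S K"
    using countable_group_iso_ngroup[OF S] countable_carrier_sum_power[OF G] unfolding S_def by blast
  define \<psi> where "\<psi> = inv_into (carrier S) \<phi>"
  have \<psi>: "\<psi> \<in> iso K S" unfolding \<psi>_def by (rule group.iso_set_sym[OF S \<phi>])
  have \<psi>\<phi>: "\<psi> (\<phi> x) = x" if "x \<in> carrier S" for x
    using \<phi> that by (simp add: \<psi>_def iso_def bij_betw_def)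
  define ins where "ins n = (\<lambda>g i. if i = n then g else \<one>\<^bsub>G\<^esub>)" for n :: nat
  define proj where "proj n = (\<lambda>x :: nat \<Rightarrow> nat. x n)" for n
  define res where "res A = (\<lambda>x i. if i \<in> A then x i else \<one>\<^bsub>G\<^esub>)" for A :: "nat set"
  have ins: "ins n \<in> hom G S" and proj: "proj n \<in> hom S G" and res: "res A \<in> hom S S" for n A
    unfolding S_def ins_def proj_def res_def
    by (simp_all add: G sum_power_insert_hom sum_power_proj_hom sum_power_restrict_hom)
  define I where "I n = restrict (\<phi> \<circ> ins n) (carrier G)" for n
  define R where "R n = restrict (proj n \<circ> \<psi>) (carrier K)" for n
  define E where "E A = restrict (\<phi> \<circ> res A \<circ> \<psi>) (carrier K)" for A
  have \<phi>_hom: "\<phi> \<in> hom S K" and \<psi>_hom: "\<psi> \<in> hom K S"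
    using \<phi> \<psi> by (simp_all add: iso_imp_homomorphism)
  show ?thesis
  proof (rule that[OF K])
    show "I n \<in> mor G K" for n
      unfolding I_def using G hom_compose[OF ins \<phi>_hom] by (rule restrict_hom_in_mor)
    show "R n \<in> mor K G" for n
      unfolding R_def using K hom_compose[OF \<psi>_hom proj] by (rule restrict_hom_in_mor)
    show "E A \<in> mor K K" for A
      unfolding E_def using K hom_compose[OF \<psi>_hom hom_compose[OF res \<phi>_hom]] by (rule restrict_hom_in_mor)
    show "compose (carrier G) (R n) (compose (carrier G) (E A) (I n))
            = (if n \<in> A then idm G else trivial_mor G G)" for n A
    proof (rule extensionalityI[where A = "carrier G"])
      fix g assume g: "g \<in> carrier G"
      have "ins n g \<in> carrier S" using g ins by (rule hom_in_carrier[rotated])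
      moreover have "res A (ins n g) \<in> carrier S" using calculation res by (rule hom_in_carrier[rotated])
      ultimately
      have "R n (E A (I n g)) = res A (ins n g) n"
        using g \<phi>_hom by (simp add: I_def E_def R_def proj_def \<psi>\<phi> hom_in_carrier)
      then show "compose (carrier G) (R n) (compose (carrier G) (E A) (I n)) g
                   = (if n \<in> A then idm G else trivial_mor G G) g"
        using g by (simp add: compose_def idm_def trivial_mor_def res_def ins_def)
    qed (auto simp: idm_def trivial_mor_def)
  qed
qed

lemma functor_trivial_mor_eq_idm:
  assumes F: "is_functor F Fm" and G: "group G"
  shows "Fm G G (trivial_mor G G) = idm (F G)"
proof -
  obtain K :: ngroup and I R :: "nat \<Rightarrow> nat \<Rightarrow> nat" and E :: "nat set \<Rightarrow> nat \<Rightarrow> nat"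
    where K: "group K" and I: "\<And>n. I n \<in> mor G K" and R: "\<And>n. R n \<in> mor K G"
    and E: "\<And>A. E A \<in> mor K K"
    and retract: "\<And>n A. compose (carrier G) (R n) (compose (carrier G) (E A) (I n))
                          = (if n \<in> A then idm G else trivial_mor G G)"
    using ngroup_coordinate_retractions[OF G] by blast
  have Fm_retract: "Fm G G (if n \<in> A then idm G else trivial_mor G G)
      = compose (carrier (F G)) (Fm K G (R n)) (compose (carrier (F G)) (Fm K K (E A)) (Fm G K (I n)))"
    for n A
    unfolding retract[symmetric]
    by (simp add: functor_compose[OF F G K G mor_compose[OF G I E] R] functor_compose[OF F G K K I E])
  have "\<not> inj (\<lambda>A. Fm K K (E A))"
  proof
    assume "inj (\<lambda>A. Fm K K (E A))"
    moreover have "range (\<lambda>A. Fm K K (E A)) \<subseteq> mor (F K) (F K)"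
      using functor_mor[OF F K K E] by blast
    then have "countable (range (\<lambda>A. Fm K K (E A)))"
      using countable_mor_fg_grp[OF functor_fg_grp[OF F K]] functor_fg_grp[OF F K]
      by (auto simp: fg_grp_def intro: countable_subset)
    ultimately show False
      using uncountable_UNIV_nat_set countable_image_inj_on by blast
  qed
  then obtain A B where "A \<noteq> B" "Fm K K (E A) = Fm K K (E B)"
    unfolding inj_def by blast
  then obtain n A' B' where "n \<in> A'" "n \<notin> B'" "Fm K K (E A') = Fm K K (E B')"
    by (metis subsetI subset_antisym)
  then show ?thesis
    using Fm_retract[of n A'] Fm_retract[of n B'] functor_idm[OF F G] by simp
qed

lemma iso_to_const_trivial_ngroup:
  assumes F: "is_functor F Fm"
  shows "iso_to_const F Fm (F trivial_ngroup)"
proof -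
  define T where "T = trivial_ngroup"
  have T: "group T" unfolding T_def by (rule group_trivial_ngroup)
  define \<eta> where "\<eta> G = Fm G T (trivial_mor G T)" for G
  have \<eta>: "\<eta> G \<in> mor (F G) (F T)" if G: "group G" for G
    unfolding \<eta>_def using F G T trivial_mor_in_mor[OF G T] by (rule functor_mor)
  have "\<eta> G \<in> iso (F G) (F T)" if G: "group G" for G
  proof (rule mor_inverse_imp_iso[OF \<eta>[OF G]])
    let ?\<epsilon> = "Fm T G (trivial_mor T G)"
    show "?\<epsilon> \<in> mor (F T) (F G)"
      using F T G trivial_mor_in_mor[OF T G] by (rule functor_mor)
    have "compose (carrier (F G)) ?\<epsilon> (\<eta> G)
        = Fm G G (compose (carrier G) (trivial_mor T G) (trivial_mor G T))"
      unfolding \<eta>_def using functor_compose[OF F G T G trivial_mor_in_mor[OF G T] trivial_mor_in_mor[OF T G]] ..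
    also have "\<dots> = Fm G G (trivial_mor G G)"
      using trivial_mor_in_mor[OF G T] by (simp add: compose_trivial_mor_left)
    finally show "compose (carrier (F G)) ?\<epsilon> (\<eta> G) = idm (F G)"
      using functor_trivial_mor_eq_idm[OF F G] by simp
    have "compose (carrier (F T)) (\<eta> G) ?\<epsilon>
        = Fm T T (compose (carrier T) (trivial_mor G T) (trivial_mor T G))"
      unfolding \<eta>_def using functor_compose[OF F T G T trivial_mor_in_mor[OF T G] trivial_mor_in_mor[OF G T]] ..
    also have "\<dots> = Fm T T (trivial_mor T T)"
      using trivial_mor_in_mor[OF T G] by (simp add: compose_trivial_mor_left)
    finally show "compose (carrier (F T)) (\<eta> G) ?\<epsilon> = idm (F T)"
      using functor_idm[OF F T] by (simp add: T_def trivial_mor_trivial_ngroup)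
  qed
  moreover have "compose (carrier (F G)) (\<eta> H) (Fm G H f) = compose (carrier (F G)) (idm (F T)) (\<eta> G)"
    if G: "group G" and H: "group H" and f: "f \<in> mor G H" for G H f
  proof -
    have "compose (carrier (F G)) (\<eta> H) (Fm G H f) = Fm G T (compose (carrier G) (trivial_mor H T) f)"
      unfolding \<eta>_def using functor_compose[OF F G H T f trivial_mor_in_mor[OF H T]] ..
    also have "\<dots> = \<eta> G"
      using f by (simp add: \<eta>_def compose_trivial_mor_left)
    finally show ?thesis using compose_idm_left[OF \<eta>[OF G]] by simp
  qed
  ultimately show ?thesis
    using \<eta> unfolding iso_to_const_def cgrp_def T_def mor_def by blast
qed

theorem proposition2p9:
  assumes "is_functor F Fm"
  shows "\<exists>C. fg_grp C \<and> iso_to_const F Fm C"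
  using functor_fg_grp[OF assms group_trivial_ngroup] iso_to_const_trivial_ngroup[OF assms]
  by blast

end
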